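(* Let $Q(z)=\Gamma_0^+(A-z)^{-1}\Gamma_0\in N_\kappa(H)$ with $A$ a bounded self-adjoint operator in a Pontryagin space $K$, $\Gamma_0:H\to K$ bounded and $\Gamma_0^+\Gamma_0$ boundedly invertible; let $P:=\Gamma_0(\Gamma_0^+\Gamma_0)^{-1}\Gamma_0^+$ and $\tilde A:=(I-P)A(I-P)$ in $(I-P)K$. Let $z_0\in\rho(A)\cap\rho(\tilde A)\cap\mathbb{C}^+$, $\Gamma:=(A-z_0)^{-1}\Gamma_0$, $\hat\Gamma:=-\Gamma Q(z_0)^{-1}$, and let $\hat A$ be the linear relation in $K$ defined by $$(\hat A-z_0)^{-1}=(A-z_0)^{-1}-(A-z_0)^{-1}\Gamma_0Q(z_0)^{-1}\Gamma_0^+(A-z_0)^{-1}.$$ Then $\hat A$ is a self-adjoint linear relation, the function $\hat Q(z):=-Q(z)^{-1}$ admits the representation $$\hat Q(z)=-Q(\bar z_0)^{-1}+(z-\bar z_0)\hat\Gamma^+\big(I+(z-z_0)(\hat A-z)^{-1}\big)\hat\Gamma ,$$ and the multivalued part of $\hat A$ satisfies $$\hat A(0):=\{y:\{0,y\}\in\hat A\}=\ker(\hat A-z_0)^{-1}=R(P)=R(\Gamma_0).$$ In particular, if $H\neq\{0\}$ then $\hat A$ is not an operator (it has a critical eigenvalue at $\infty$).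
   Context: $H$ is a Hilbert space; $(K,[\cdot,\cdot])$ a Pontryagin space; for bounded $\Gamma_0:H\to K$, $\Gamma_0^+$ is defined by $(h,\Gamma_0^+k)=[\Gamma_0h,k]$. $N_\kappa(H)$ denotes generalized Nevanlinna functions with $\kappa$ negative squares. A linear relation is a linear subspace of $K\times K$; $R(\cdot)$ denotes range. Note that $Q(z)=Q(z_0)^*+(z-\bar z_0)\Gamma^+(I+(z-z_0)(A-z)^{-1})\Gamma$ with $\Gamma=(A-z_0)^{-1}\Gamma_0$. *)

theory Defs
  imports Complex_Main
begin

class cvec = ab_group_add +
  fixes cscale :: "complex \<Rightarrow> 'a \<Rightarrow> 'a"  (infixr "*\<^sub>C" 75)
  assumes cscale_add_right: "a *\<^sub>C (x + y) = a *\<^sub>C x + a *\<^sub>C y"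
    and cscale_add_left: "(a + b) *\<^sub>C x = a *\<^sub>C x + b *\<^sub>C x"
    and cscale_mult: "a *\<^sub>C (b *\<^sub>C x) = (a * b) *\<^sub>C x"
    and cscale_one: "1 *\<^sub>C x = x"

class chilbert = cvec +
  fixes cinner :: "'a \<Rightarrow> 'a \<Rightarrow> complex"
  assumes cinner_add_left: "cinner (x + y) z = cinner x z + cinner y z"
    and cinner_scale_left: "cinner (a *\<^sub>C x) y = a * cinner x y"
    and cinner_commute: "cinner y x = cnj (cinner x y)"
    and cinner_pos: "x \<noteq> 0 \<Longrightarrow> 0 < Re (cinner x x)"
    and cinner_complete:
      "(\<forall>e>0. \<exists>N::nat. \<forall>m\<ge>N. \<forall>n\<ge>N. sqrt (Re (cinner (X m - X n) (X m - X n))) < e)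
       \<Longrightarrow> (\<exists>L. \<forall>e>0. \<exists>N::nat. \<forall>n\<ge>N. sqrt (Re (cinner (X n - L) (X n - L))) < e)"

definition hnorm :: "'a::chilbert \<Rightarrow> real" where
  "hnorm x = sqrt (Re (cinner x x))"

definition clinear :: "('a::cvec \<Rightarrow> 'b::cvec) \<Rightarrow> bool" where
  "clinear f \<longleftrightarrow> (\<forall>x y. f (x + y) = f x + f y) \<and> (\<forall>c x. f (c *\<^sub>C x) = c *\<^sub>C f x)"

definition bop :: "('a::chilbert \<Rightarrow> 'b::chilbert) \<Rightarrow> bool" where
  "bop f \<longleftrightarrow> clinear f \<and> (\<exists>C. \<forall>x. hnorm (f x) \<le> C * hnorm x)"

definition binvertible :: "('a::chilbert \<Rightarrow> 'b::chilbert) \<Rightarrow> bool" where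
  "binvertible T \<longleftrightarrow> (\<exists>B. bop B \<and> (\<forall>x. B (T x) = x) \<and> (\<forall>y. T (B y) = y))"

definition finite_cdim :: "'a::cvec set \<Rightarrow> bool" where
  "finite_cdim V \<longleftrightarrow> (\<exists>S. finite S \<and> V \<subseteq> {\<Sum>x\<in>S. c x *\<^sub>C x | c. True})"

text \<open>A Pontryagin space is represented as a Hilbert space (K,(.,.)) together with a fundamental
  symmetry J (bounded, J^2 = I, J self-adjoint) whose negative part ker(J+I) is finite dimensional;
  the indefinite inner product is [x,y] = (Jx,y).\<close>
definition pontryagin :: "('k::chilbert \<Rightarrow> 'k) \<Rightarrow> bool" where
  "pontryagin J \<longleftrightarrow> bop J \<and> (\<forall>x. J (J x) = x) \<and> (\<forall>x y. cinner (J x) y = cinner x (J y))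
     \<and> finite_cdim {x. J x = - x}"

definition kinner :: "('k::chilbert \<Rightarrow> 'k) \<Rightarrow> 'k \<Rightarrow> 'k \<Rightarrow> complex" where
  "kinner J x y = cinner (J x) y"

definition padj :: "('k::chilbert \<Rightarrow> 'k) \<Rightarrow> ('h::chilbert \<Rightarrow> 'k) \<Rightarrow> ('k \<Rightarrow> 'h)" where
  "padj J G = (THE B. \<forall>h k. cinner h (B k) = kinner J (G h) k)"

definition cres :: "('a::chilbert \<Rightarrow> 'a) \<Rightarrow> complex set" where
  "cres A = {z. binvertible (\<lambda>x. A x - z *\<^sub>C x)}"

definition cresolvent :: "('a::chilbert \<Rightarrow> 'a) \<Rightarrow> complex \<Rightarrow> 'a \<Rightarrow> 'a" where
  "cresolvent A z = inv (\<lambda>x. A x - z *\<^sub>C x)"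

definition res_on :: "'a::chilbert set \<Rightarrow> ('a \<Rightarrow> 'a) \<Rightarrow> complex set" where
  "res_on S T = {z. bij_betw (\<lambda>x. T x - z *\<^sub>C x) S S \<and>
      (\<exists>C. \<forall>y\<in>S. hnorm (inv_into S (\<lambda>x. T x - z *\<^sub>C x) y) \<le> C * hnorm y)}"

definition linrel :: "('a::cvec \<times> 'a) set \<Rightarrow> bool" where
  "linrel T \<longleftrightarrow> (0, 0) \<in> T \<and>
     (\<forall>x y u v. (x, y) \<in> T \<longrightarrow> (u, v) \<in> T \<longrightarrow> (x + u, y + v) \<in> T) \<and>
     (\<forall>c x y. (x, y) \<in> T \<longrightarrow> (c *\<^sub>C x, c *\<^sub>C y) \<in> T)"

definition ograph :: "('a \<Rightarrow> 'a) \<Rightarrow> ('a \<times> 'a) set" where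
  "ograph f = {(x, f x) | x. True}"

definition rshift :: "('a::cvec \<times> 'a) set \<Rightarrow> complex \<Rightarrow> ('a \<times> 'a) set" where
  "rshift T z = {(x, y - z *\<^sub>C x) | x y. (x, y) \<in> T}"

definition rinv :: "('a \<times> 'a) set \<Rightarrow> ('a \<times> 'a) set" where
  "rinv T = {(y, x) | x y. (x, y) \<in> T}"

definition radj :: "('k::chilbert \<Rightarrow> 'k) \<Rightarrow> ('k \<times> 'k) set \<Rightarrow> ('k \<times> 'k) set" where
  "radj J T = {(h, k). \<forall>f g. (f, g) \<in> T \<longrightarrow> kinner J k f = kinner J h g}"

definition rres :: "('a::chilbert \<times> 'a) set \<Rightarrow> complex set" where
  "rres T = {z. \<exists>R. bop R \<and> rinv (rshift T z) = ograph R}"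

definition rresolvent :: "('a::chilbert \<times> 'a) set \<Rightarrow> complex \<Rightarrow> 'a \<Rightarrow> 'a" where
  "rresolvent T z = (THE R. rinv (rshift T z) = ograph R)"

definition mulpart :: "('a::zero \<times> 'a) set \<Rightarrow> 'a set" where
  "mulpart T = {y. (0, y) \<in> T}"

definition rker :: "('a::zero \<times> 'a) set \<Rightarrow> 'a set" where
  "rker T = {x. (x, 0) \<in> T}"

end

theory Submission
  imports Defs
begin

text \<open>Write \<open>R(z) = (A - z)\<^sup>-\<^sup>1\<close> and \<open>Q(z) = \<Gamma>\<^sub>0\<^sup>+ R(z) \<Gamma>\<^sub>0\<close>. The invertibility of \<open>Q(z\<^sub>0)\<close>
  comes from \<open>z\<^sub>0 \<in> \<rho>(\<tilde>A)\<close>: \<open>Q(z\<^sub>0) h = 0\<close> puts \<open>R(z\<^sub>0)\<Gamma>\<^sub>0h\<close> into \<open>ker(\<tilde>A - z\<^sub>0)\<close>, and a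
  preimage of \<open>k\<close> is obtained by solving for the \<open>(I - P)K\<close>-component with \<open>(\<tilde>A - z\<^sub>0)\<^sup>-\<^sup>1\<close>.
  The Krein-type operators \<open>\<hat>R(z) = R(z) - R(z)\<Gamma>\<^sub>0Q(z)\<^sup>-\<^sup>1\<Gamma>\<^sub>0\<^sup>+R(z)\<close> then satisfy the
  resolvent identity \<open>\<hat>R(z) - \<hat>R(w) = (z - w)\<hat>R(z)\<hat>R(w)\<close> and \<open>\<hat>R(z\<^sub>0)\<^sup>+ = \<hat>R(\<bar>z\<^sub>0)\<close>.
  Hence the relation \<open>\<hat>A\<close> with \<open>(\<hat>A - z\<^sub>0)\<^sup>-\<^sup>1 = \<hat>R(z\<^sub>0)\<close> is self-adjoint, its resolvent at
  every regular \<open>z\<close> is \<open>\<hat>R(z)\<close>, and the representation of \<open>-Q(z)\<^sup>-\<^sup>1\<close> is a direct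
  computation with these identities. Finally \<open>R(z\<^sub>0)\<close> is injective, so \<open>\<hat>R(z\<^sub>0)x = 0\<close> iff
  \<open>x = \<Gamma>\<^sub>0Q(z\<^sub>0)\<^sup>-\<^sup>1\<Gamma>\<^sub>0\<^sup>+R(z\<^sub>0)x\<close>, i.e. \<open>ker \<hat>R(z\<^sub>0) = R(\<Gamma>\<^sub>0)\<close>.\<close>

section \<open>Complex inner product spaces\<close>

lemma cscale_zero_left[simp]: "(0::complex) *\<^sub>C (x::'a::cvec) = 0"
proof -
  have "(0::complex) *\<^sub>C x = (0 + 0) *\<^sub>C x" by simp
  also have "\<dots> = 0 *\<^sub>C x + 0 *\<^sub>C x" by (rule cscale_add_left)
  finally show ?thesis by simp
qed

lemma cscale_zero_right[simp]: "a *\<^sub>C (0::'a::cvec) = 0"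
proof -
  have "a *\<^sub>C (0::'a) = a *\<^sub>C (0 + 0)" by simp
  also have "\<dots> = a *\<^sub>C 0 + a *\<^sub>C 0" by (rule cscale_add_right)
  finally show ?thesis by simp
qed

lemma cscale_minus_left: "(- a) *\<^sub>C (x::'a::cvec) = - (a *\<^sub>C x)"
proof -
  have "(- a) *\<^sub>C x + a *\<^sub>C x = (-a + a) *\<^sub>C x" by (simp only: cscale_add_left)
  also have "\<dots> = 0" by simp
  finally show ?thesis by (simp add: eq_neg_iff_add_eq_0)
qed

lemma cscale_minus_right: "a *\<^sub>C (- x::'a::cvec) = - (a *\<^sub>C x)"
proof -
  have "a *\<^sub>C (- x) + a *\<^sub>C x = a *\<^sub>C (- x + x)" by (simp only: cscale_add_right)
  also have "\<dots> = 0" by simp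
  finally show ?thesis by (simp add: eq_neg_iff_add_eq_0)
qed

lemma cscale_diff_right: "a *\<^sub>C (x - y::'a::cvec) = a *\<^sub>C x - a *\<^sub>C y"
  by (simp only: diff_conv_add_uminus cscale_add_right cscale_minus_right)

lemma cscale_diff_left: "(a - b) *\<^sub>C (x::'a::cvec) = a *\<^sub>C x - b *\<^sub>C x"
  by (simp only: diff_conv_add_uminus cscale_add_left cscale_minus_left)

declare cscale_one[simp]

lemma cscale_minus_one[simp]: "(-1) *\<^sub>C (x::'a::cvec) = - x"
  by (simp add: cscale_minus_left)

lemma cinner_add_right: "cinner x (y + z) = cinner x y + cinner (x::'a::chilbert) z"
proof -
  have "cinner x (y + z) = cnj (cinner (y + z) x)" by (rule cinner_commute)
  also have "\<dots> = cnj (cinner y x) + cnj (cinner z x)" by (simp add: cinner_add_left)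
  also have "\<dots> = cinner x y + cinner x z" by (simp flip: cinner_commute)
  finally show ?thesis .
qed

lemma cinner_scale_right: "cinner x (a *\<^sub>C y) = cnj a * cinner (x::'a::chilbert) y"
proof -
  have "cinner x (a *\<^sub>C y) = cnj (cinner (a *\<^sub>C y) x)" by (rule cinner_commute)
  also have "\<dots> = cnj a * cnj (cinner y x)" by (simp add: cinner_scale_left)
  also have "\<dots> = cnj a * cinner x y" by (simp flip: cinner_commute)
  finally show ?thesis .
qed

lemma cinner_zero_left[simp]: "cinner 0 (y::'a::chilbert) = 0"
proof -
  have "cinner 0 y = cinner ((0::complex) *\<^sub>C (0::'a)) y" by simp
  also have "\<dots> = 0" by (simp only: cinner_scale_left) simp
  finally show ?thesis .
qed

lemma cinner_zero_right[simp]: "cinner (y::'a::chilbert) 0 = 0"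
  by (subst cinner_commute) simp

lemma cinner_minus_left: "cinner (- x) (y::'a::chilbert) = - cinner x y"
proof -
  have "cinner (- x) y = cinner ((-1) *\<^sub>C x) y" by simp
  also have "\<dots> = - cinner x y" by (simp only: cinner_scale_left) simp
  finally show ?thesis .
qed

lemma cinner_minus_right: "cinner x (- y::'a::chilbert) = - cinner x y"
  by (subst cinner_commute) (simp add: cinner_minus_left flip: cinner_commute)

lemma cinner_diff_left: "cinner (x - z) (y::'a::chilbert) = cinner x y - cinner z y"
  by (simp only: diff_conv_add_uminus cinner_add_left cinner_minus_left)

lemma cinner_diff_right: "cinner x (y - z::'a::chilbert) = cinner x y - cinner x z"
  by (simp only: diff_conv_add_uminus cinner_add_right cinner_minus_right)

lemma cinner_self_Im: "Im (cinner x (x::'a::chilbert)) = 0"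
proof -
  have "cinner x x = cnj (cinner x x)" by (rule cinner_commute)
  then have "Im (cinner x x) = - Im (cinner x x)" by (metis cnj.sel(2))
  then show ?thesis by simp
qed

lemma cinner_self_real: "cinner x (x::'a::chilbert) = complex_of_real (Re (cinner x x))"
  by (simp add: cinner_self_Im complex_eq_iff)

lemma cinner_self_nonneg: "0 \<le> Re (cinner x (x::'a::chilbert))"
  by (cases "x = 0") (auto dest: cinner_pos)

lemma cinner_self_eq_0_iff: "cinner x x = 0 \<longleftrightarrow> x = (0::'a::chilbert)"
proof
  assume "cinner x x = 0"
  then show "x = 0" using cinner_pos[of x] by (cases "x = 0") auto
qed simp

lemma cinner_ext: "(\<And>h. cinner h a = cinner h (b::'a::chilbert)) \<Longrightarrow> a = b"
proof -
  assume "\<And>h. cinner h a = cinner h b"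
  then have "cinner (a - b) (a - b) = 0" by (simp add: cinner_diff_right)
  then show "a = b" by (simp add: cinner_self_eq_0_iff)
qed

definition nsq :: "'a::chilbert \<Rightarrow> real" where "nsq x = Re (cinner x x)"

lemma nsq_nonneg: "0 \<le> nsq x"
  unfolding nsq_def by (rule cinner_self_nonneg)

lemma hnorm_nsq: "hnorm x = sqrt (nsq x)" by (simp add: hnorm_def nsq_def)

lemma hnorm_nonneg: "0 \<le> hnorm x" by (simp add: hnorm_nsq nsq_nonneg)

lemma hnorm_sq: "(hnorm x)\<^sup>2 = nsq x" by (simp add: hnorm_nsq nsq_nonneg)

lemma cinner_self_nsq: "cinner x x = complex_of_real (nsq x)"
  unfolding nsq_def by (rule cinner_self_real)

lemma nsq_eq_0_iff: "nsq x = 0 \<longleftrightarrow> x = 0"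
  by (metis cinner_self_eq_0_iff cinner_self_nsq of_real_eq_0_iff)

lemma hnorm_eq_0_iff: "hnorm x = 0 \<longleftrightarrow> x = 0"
  by (simp add: hnorm_nsq nsq_eq_0_iff)

lemma hnorm_zero[simp]: "hnorm 0 = 0" by (simp add: hnorm_eq_0_iff)

lemma cinner_expand: "cinner (x + t *\<^sub>C y) (x + t *\<^sub>C y) =
   cinner x x + cnj t * cinner x y + t * cinner y x + t * cnj t * cinner y y"
  by (simp add: cinner_add_left cinner_add_right cinner_scale_left cinner_scale_right algebra_simps)

lemma nsq_scale: "nsq (c *\<^sub>C x) = (cmod c)\<^sup>2 * nsq x"
proof -
  have "cinner (c *\<^sub>C x) (c *\<^sub>C x) = (c * cnj c) * cinner x x"
    by (simp add: cinner_scale_left cinner_scale_right)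
  also have "\<dots> = complex_of_real ((cmod c)\<^sup>2 * nsq x)"
    by (simp add: cinner_self_nsq flip: complex_norm_square)
  finally show ?thesis by (simp add: nsq_def)
qed

lemma hnorm_scale: "hnorm (c *\<^sub>C x) = cmod c * hnorm x"
  by (simp add: hnorm_nsq nsq_scale real_sqrt_mult)

lemma hnorm_minus: "hnorm (- x) = hnorm x"
  using hnorm_scale[of "-1" x] by simp

lemma hnorm_diff_commute: "hnorm (x - y) = hnorm (y - x)"
  by (metis hnorm_minus minus_diff_eq)

lemma cauchy_schwarz_sq: "(cmod (cinner x y))\<^sup>2 \<le> nsq x * nsq y"
proof (cases "y = 0")
  case True then show ?thesis by (simp add: nsq_def)
next
  case False
  define b where "b = nsq y"
  define a where "a = cinner x y"
  have b: "b > 0" using False nsq_nonneg nsq_eq_0_iff b_def by (metis less_eq_real_def)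
  define t where "t = - a / complex_of_real b"
  have yx: "cinner y x = cnj a" by (simp add: a_def flip: cinner_commute)
  have "cinner (x + t *\<^sub>C y) (x + t *\<^sub>C y) = cinner x x + cnj t * a + t * cnj a + t * cnj t * complex_of_real b"
    by (subst cinner_expand) (simp add: a_def yx b_def cinner_self_nsq)
  also have "\<dots> = cinner x x - a * cnj a / complex_of_real b"
    using b by (simp add: t_def field_simps)
  also have "\<dots> = complex_of_real (nsq x - (cmod a)\<^sup>2 / b)"
    by (simp add: cinner_self_nsq flip: complex_norm_square)
  finally have "nsq (x + t *\<^sub>C y) = nsq x - (cmod a)\<^sup>2 / b" by (simp add: nsq_def)
  then have "0 \<le> nsq x - (cmod a)\<^sup>2 / b" using nsq_nonneg by metis
  then show ?thesis using b by (simp add: a_def b_def field_simps)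
qed

lemma cauchy_schwarz: "cmod (cinner x y) \<le> hnorm x * hnorm y"
proof -
  have "(cmod (cinner x y))\<^sup>2 \<le> (hnorm x * hnorm y)\<^sup>2"
    using cauchy_schwarz_sq by (simp add: power_mult_distrib hnorm_sq)
  then show ?thesis using hnorm_nonneg by (meson mult_nonneg_nonneg power2_le_imp_le)
qed

lemma nsq_add: "nsq (x + y) = nsq x + 2 * Re (cinner x y) + nsq y"
proof -
  have "cinner (x + y) (x + y) = cinner x x + cinner x y + cnj (cinner x y) + cinner y y"
    by (simp add: cinner_add_left cinner_add_right flip: cinner_commute)
  then show ?thesis by (simp add: nsq_def)
qed

lemma hnorm_triangle: "hnorm (x + y) \<le> hnorm x + hnorm y"
proof -
  have "Re (cinner x y) \<le> hnorm x * hnorm y"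
    using cauchy_schwarz complex_Re_le_cmod order_trans by blast
  then have "nsq (x + y) \<le> (hnorm x + hnorm y)\<^sup>2"
    by (simp add: nsq_add power2_sum hnorm_sq)
  then have "(hnorm (x + y))\<^sup>2 \<le> (hnorm x + hnorm y)\<^sup>2" by (simp add: hnorm_sq)
  then show ?thesis using hnorm_nonneg by (meson add_nonneg_nonneg power2_le_imp_le)
qed

lemma parallelogram: "nsq (x - y) + nsq (x + y) = 2 * nsq x + 2 * nsq y"
proof -
  have "nsq (x - y) = nsq x - 2 * Re (cinner x y) + nsq y"
    using nsq_add[of x "- y"] by (simp add: cinner_minus_right nsq_def cinner_minus_left)
  then show ?thesis by (simp add: nsq_add)
qed

lemma nsq_le_iff_hnorm_le: "nsq x \<le> nsq y \<longleftrightarrow> hnorm x \<le> hnorm y"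
  by (simp add: hnorm_nsq)

section \<open>Minimal-norm points and the Riesz representation\<close>

definition hconverges :: "(nat \<Rightarrow> 'a::chilbert) \<Rightarrow> 'a \<Rightarrow> bool" where
  "hconverges X L \<longleftrightarrow> (\<forall>e>0. \<exists>N. \<forall>n\<ge>N. hnorm (X n - L) < e)"

lemma cauchy_hconverges:
  assumes "\<forall>e>0. \<exists>N::nat. \<forall>m\<ge>N. \<forall>n\<ge>N. hnorm (X m - X n) < e"
  shows "\<exists>L. hconverges X L"
  using cinner_complete[of X] assms unfolding hconverges_def hnorm_def by blast

lemma nsq_diff_le_midpoint:
  assumes "0 \<le> d" and "d \<le> hnorm ((1/2) *\<^sub>C (x + y))"
  shows "nsq (x - y) \<le> 2 * nsq x + 2 * nsq y - 4 * d\<^sup>2"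
proof -
  have "d\<^sup>2 \<le> nsq ((1/2) *\<^sub>C (x + y))"
    using assms by (metis hnorm_sq power_mono)
  moreover have "nsq (x + y) = 4 * nsq ((1/2) *\<^sub>C (x + y))"
    by (simp add: nsq_scale power2_eq_square)
  ultimately show ?thesis using parallelogram[of x y] by linarith
qed

lemma minimizing_sequence_cauchy:
  assumes d0: "0 \<le> d"
    and mid: "\<And>m n. d \<le> hnorm ((1/2) *\<^sub>C (X m + X n))"
    and X: "\<And>n. hnorm (X n) \<le> d + 1 / (real n + 1)"
  shows "\<forall>e>0. \<exists>N::nat. \<forall>m\<ge>N. \<forall>n\<ge>N. hnorm (X m - X n) < e"
proof (intro allI impI)
  fix e :: real assume e: "0 < e"
  obtain N :: nat where N: "4 * (2 * d + 1) / e\<^sup>2 < real N"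
    using reals_Archimedean2 by blast
  define \<epsilon> where "\<epsilon> = 1 / (real N + 1)"
  have \<epsilon>: "0 < \<epsilon>" "\<epsilon> \<le> 1" by (auto simp: \<epsilon>_def)
  have "4 * (2 * d + 1) < e\<^sup>2 * real N"
    using N e by (simp add: field_simps)
  also have "\<dots> \<le> e\<^sup>2 * (real N + 1)" using e by simp
  finally have "4 * (2 * d + 1) < e\<^sup>2 * (real N + 1)" .
  then have small: "4 * \<epsilon> * (2 * d + 1) < e\<^sup>2"
    using e by (simp add: \<epsilon>_def field_simps)
  have tail: "nsq (X k) \<le> (d + \<epsilon>)\<^sup>2" if "k \<ge> N" for k
  proof -
    have "1 / (real k + 1) \<le> \<epsilon>" unfolding \<epsilon>_def using that by (simp add: frac_le)
    then have "hnorm (X k) \<le> d + \<epsilon>" using X[of k] by linarith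
    then show ?thesis using hnorm_nonneg by (metis hnorm_sq power_mono)
  qed
  show "\<exists>N. \<forall>m\<ge>N. \<forall>n\<ge>N. hnorm (X m - X n) < e"
  proof (intro exI allI impI)
    fix m n assume "N \<le> m" "N \<le> n"
    have "nsq (X m - X n) \<le> 2 * (d + \<epsilon>)\<^sup>2 + 2 * (d + \<epsilon>)\<^sup>2 - 4 * d\<^sup>2"
      using nsq_diff_le_midpoint[OF d0 mid[of m n]] tail[OF \<open>N \<le> m\<close>] tail[OF \<open>N \<le> n\<close>]
      by linarith
    also have "\<dots> = 4 * \<epsilon> * (2 * d + \<epsilon>)" by (simp add: power2_eq_square algebra_simps)
    also have "\<dots> \<le> 4 * \<epsilon> * (2 * d + 1)" using \<epsilon> by simp
    finally have "nsq (X m - X n) < e\<^sup>2" using small by linarith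
    then show "hnorm (X m - X n) < e"
      using e real_sqrt_less_mono[of _ "e\<^sup>2"] by (simp add: hnorm_nsq)
  qed
qed

lemma hconverges_hnorm_le:
  assumes L: "hconverges X L" and X: "\<And>n. hnorm (X n) \<le> d + 1 / (real n + 1)"
  shows "hnorm L \<le> d"
proof (rule field_le_epsilon)
  fix e :: real assume e: "0 < e"
  obtain N where N: "\<forall>n\<ge>N. hnorm (X n - L) < e / 2"
    using L e unfolding hconverges_def by (meson half_gt_zero)
  obtain M :: nat where M: "2 / e < real M" using reals_Archimedean2 by blast
  define n where "n = max N M"
  have "2 / e < real n + 1" using M by (simp add: n_def)
  then have small: "1 / (real n + 1) < e / 2" using e by (simp add: field_simps)
  have "hnorm L \<le> hnorm (L - X n) + hnorm (X n)"
    by (metis diff_add_cancel hnorm_triangle)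
  moreover have "hnorm (L - X n) < e / 2"
    using N hnorm_diff_commute[of L "X n"] by (simp add: n_def)
  ultimately show "hnorm L \<le> d + e" using X[of n] small by linarith
qed

lemma min_norm_point_exists:
  assumes "a \<in> S"
    and midpoint: "\<And>x y. x \<in> S \<Longrightarrow> y \<in> S \<Longrightarrow> (1/2) *\<^sub>C (x + y) \<in> S"
    and closed: "\<And>X L. (\<And>n. X n \<in> S) \<Longrightarrow> hconverges X L \<Longrightarrow> L \<in> S"
  shows "\<exists>L\<in>S. \<forall>x\<in>S. hnorm L \<le> hnorm x"
proof -
  define d where "d = Inf (hnorm ` S)"
  have ne: "hnorm ` S \<noteq> {}" using \<open>a \<in> S\<close> by auto
  have bdd: "bdd_below (hnorm ` S)" by (rule bdd_belowI[of _ 0]) (auto simp: hnorm_nonneg)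
  have d_le: "d \<le> hnorm x" if "x \<in> S" for x
    unfolding d_def by (rule cInf_lower) (use that bdd in auto)
  have d0: "0 \<le> d" unfolding d_def by (rule cInf_greatest[OF ne]) (auto simp: hnorm_nonneg)
  have "\<exists>x\<in>S. hnorm x < d + 1 / (real n + 1)" for n
    using cInf_less_iff[OF ne bdd, of "d + 1 / (real n + 1)"] by (simp add: d_def)
  then obtain X where X: "\<And>n. X n \<in> S" "\<And>n. hnorm (X n) < d + 1 / (real n + 1)"
    by metis
  have "\<exists>L. hconverges X L"
  proof (rule cauchy_hconverges, rule minimizing_sequence_cauchy[OF d0])
    show "d \<le> hnorm ((1/2) *\<^sub>C (X m + X n))" for m n by (rule d_le) (simp add: X midpoint)
    show "hnorm (X n) \<le> d + 1 / (real n + 1)" for n using X(2)[of n] by simp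
  qed
  then obtain L where L: "hconverges X L" by blast
  have "hnorm L \<le> d" using hconverges_hnorm_le[OF L] X(2) less_imp_le by blast
  then show ?thesis using closed[OF X(1) L] d_le by force
qed

lemma min_norm_orthogonal:
  assumes min: "\<And>t. hnorm L \<le> hnorm (L + t *\<^sub>C n)"
  shows "cinner n L = 0"
proof -
  define \<alpha> where "\<alpha> = cinner n L"
  define s where "s = 1 / (nsq n + 1)"
  define q where "q = (cmod \<alpha>)\<^sup>2"
  define t where "t = - (complex_of_real s) * cnj \<alpha>"
  have s0: "0 < s" using nsq_nonneg[of n] by (simp add: s_def)
  have sn: "s * nsq n < 1" using nsq_nonneg[of n] by (simp add: s_def field_simps)
  have Ln: "cinner L n = cnj \<alpha>" by (simp add: \<alpha>_def flip: cinner_commute)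
  have aa: "\<alpha> * cnj \<alpha> = complex_of_real q"
    unfolding q_def by (rule complex_norm_square[symmetric])
  have "cinner (L + t *\<^sub>C n) (L + t *\<^sub>C n) =
        complex_of_real (nsq L) + cnj t * cnj \<alpha> + t * \<alpha> + t * cnj t * complex_of_real (nsq n)"
    by (subst cinner_expand) (simp add: Ln \<alpha>_def cinner_self_nsq)
  also have "\<dots> = complex_of_real (nsq L) - 2 * complex_of_real s * (\<alpha> * cnj \<alpha>)
                    + (complex_of_real s)\<^sup>2 * (\<alpha> * cnj \<alpha>) * complex_of_real (nsq n)"
    by (simp add: t_def algebra_simps power2_eq_square)
  also have "\<dots> = complex_of_real (nsq L - 2 * s * q + s\<^sup>2 * q * nsq n)"
    by (simp add: aa)
  finally have "nsq (L + t *\<^sub>C n) = nsq L - 2 * s * q + s\<^sup>2 * q * nsq n"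
    by (simp add: nsq_def)
  moreover have "nsq L \<le> nsq (L + t *\<^sub>C n)"
    using min nsq_le_iff_hnorm_le by blast
  ultimately have "0 \<le> (s * q) * (s * nsq n - 2)"
    by (simp add: algebra_simps power2_eq_square)
  then have "s * q \<le> 0" using sn by (smt (verit) mult_pos_neg)
  then have "q = 0" using s0 by (simp add: q_def mult_le_0_iff)
  then show ?thesis by (simp add: q_def \<alpha>_def)
qed

lemma riesz:
  fixes f :: "'a::chilbert \<Rightarrow> complex"
  assumes add: "\<And>x y. f (x + y) = f x + f y" and scale: "\<And>c x. f (c *\<^sub>C x) = c * f x"
    and bound: "\<And>x. cmod (f x) \<le> C * hnorm x"
  shows "\<exists>w. \<forall>x. f x = cinner x w"
proof (cases "\<forall>x. f x = 0")
  case True then show ?thesis by (intro exI[of _ 0]) simp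
next
  case False
  then obtain a where fa: "f a \<noteq> 0" by blast
  have fdiff: "f (x - y) = f x - f y" for x y
    using add[of "x - y" y] by simp
  have C0: "0 \<le> C"
  proof (rule ccontr)
    assume "\<not> 0 \<le> C"
    then have "C * hnorm a \<le> 0" using hnorm_nonneg[of a] by (simp add: mult_nonpos_nonneg)
    then show False using bound[of a] fa by (metis norm_le_zero_iff order_trans)
  qed
  define S where "S = {x. f x = 1}"
  have "\<exists>L\<in>S. \<forall>x\<in>S. hnorm L \<le> hnorm x"
  proof (rule min_norm_point_exists)
    show "(1 / f a) *\<^sub>C a \<in> S" by (simp add: S_def scale fa)
    show "(1/2) *\<^sub>C (x + y) \<in> S" if "x \<in> S" "y \<in> S" for x y
      using that by (simp add: S_def scale add)
    show "L \<in> S" if X: "\<And>n. X n \<in> S" and L: "hconverges X L" for X L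
    proof (rule ccontr)
      assume "L \<notin> S"
      define \<delta> where "\<delta> = cmod (f L - 1)"
      have \<delta>: "0 < \<delta>" using \<open>L \<notin> S\<close> by (simp add: S_def \<delta>_def)
      have "0 < \<delta> / (C + 1)" using \<delta> C0 by simp
      then obtain N where N: "hnorm (X N - L) < \<delta> / (C + 1)"
        using L unfolding hconverges_def by blast
      have "cmod (1 - f L) = cmod (f (X N - L))" using X[of N] by (simp add: S_def fdiff)
      also have "\<dots> \<le> C * hnorm (X N - L)" by (rule bound)
      also have "\<dots> \<le> C * (\<delta> / (C + 1))" using mult_left_mono[OF less_imp_le[OF N] C0] by simp
      also have "\<dots> < \<delta>" using C0 \<delta> by (simp add: field_simps)
      finally show False by (simp add: \<delta>_def norm_minus_commute)
    qed
  qed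
  then obtain L where "L \<in> S" and min: "\<And>x. x \<in> S \<Longrightarrow> hnorm L \<le> hnorm x"
    by blast
  then have L: "f L = 1" by (simp add: S_def)
  have orth: "cinner n L = 0" if "f n = 0" for n
    by (rule min_norm_orthogonal, rule min) (simp add: S_def add scale L that)
  have nL: "nsq L \<noteq> 0" using L nsq_eq_0_iff[of L] scale[of 0 0] by auto
  have "f x = cinner x ((1 / nsq L) *\<^sub>C L)" for x
  proof -
    have "cinner (x - f x *\<^sub>C L) L = 0" by (rule orth) (simp add: fdiff scale L)
    then have "cinner x L = f x * nsq L"
      by (simp add: cinner_diff_left cinner_scale_left cinner_self_nsq)
    then show ?thesis using nL by (simp add: cinner_scale_right)
  qed
  then show ?thesis by blast
qed

section \<open>Bounded operators and Hilbert-space adjoints\<close>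

lemma clinear_add: "clinear f \<Longrightarrow> f (x + y) = f x + f y" by (simp add: clinear_def)
lemma clinear_scale: "clinear f \<Longrightarrow> f (c *\<^sub>C x) = c *\<^sub>C f x" by (simp add: clinear_def)
lemma clinear_zero: "clinear f \<Longrightarrow> f 0 = 0"
  using clinear_scale[of f 0 0] by simp
lemma clinear_minus: "clinear f \<Longrightarrow> f (- x) = - f x"
  using clinear_scale[of f "-1" x] by simp
lemma clinear_diff: "clinear f \<Longrightarrow> f (x - y) = f x - f y"
  using clinear_add[of f "x - y" y] by (simp add: eq_diff_eq)

lemma clinear_comp: "clinear f \<Longrightarrow> clinear g \<Longrightarrow> clinear (\<lambda>x. f (g x))"
  by (simp add: clinear_def)

lemmas clinear_rules = clinear_add clinear_diff clinear_scale clinear_minus clinear_zero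

lemma clinear_inverse:
  assumes "clinear f" "\<And>x. g (f x) = x" "\<And>y. f (g y) = y"
  shows "clinear g"
  unfolding clinear_def
proof (intro conjI allI)
  fix x y
  have "g (x + y) = g (f (g x) + f (g y))" by (simp add: assms)
  also have "\<dots> = g (f (g x + g y))" by (simp add: clinear_add[OF assms(1)])
  finally show "g (x + y) = g x + g y" by (simp add: assms)
next
  fix c x
  have "g (c *\<^sub>C x) = g (c *\<^sub>C f (g x))" by (simp add: assms)
  also have "\<dots> = g (f (c *\<^sub>C g x))" by (simp add: clinear_scale[OF assms(1)])
  finally show "g (c *\<^sub>C x) = c *\<^sub>C g x" by (simp add: assms)
qed

definition norm_bounded :: "('a::chilbert \<Rightarrow> 'b::chilbert) \<Rightarrow> bool" where
  "norm_bounded f \<longleftrightarrow> (\<exists>C\<ge>0. \<forall>x. hnorm (f x) \<le> C * hnorm x)"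

lemma bop_clinear: "bop f \<Longrightarrow> clinear f" by (simp add: bop_def)

lemma bop_norm_bounded: assumes "bop f" shows "norm_bounded f"
proof -
  obtain C where C: "\<forall>x. hnorm (f x) \<le> C * hnorm x" using assms by (auto simp: bop_def)
  have "hnorm (f x) \<le> max C 0 * hnorm x" for x
  proof -
    have "C * hnorm x \<le> max C 0 * hnorm x" using hnorm_nonneg[of x] by (simp add: mult_right_mono)
    then show ?thesis using C by (meson order_trans)
  qed
  then show ?thesis unfolding norm_bounded_def by (intro exI[of _ "max C 0"]) auto
qed

lemma bopI: "clinear f \<Longrightarrow> norm_bounded f \<Longrightarrow> bop f"
  unfolding bop_def norm_bounded_def by blast

lemma norm_bounded_comp: assumes "norm_bounded f" "norm_bounded g" shows "norm_bounded (\<lambda>x. f (g x))"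
proof -
  obtain C where C: "C \<ge> 0" "\<forall>x. hnorm (f x) \<le> C * hnorm x" using assms(1) by (auto simp: norm_bounded_def)
  obtain D where D: "D \<ge> 0" "\<forall>x. hnorm (g x) \<le> D * hnorm x" using assms(2) by (auto simp: norm_bounded_def)
  have "hnorm (f (g x)) \<le> (C * D) * hnorm x" for x
  proof -
    have "hnorm (f (g x)) \<le> C * hnorm (g x)" using C by blast
    also have "\<dots> \<le> C * (D * hnorm x)" using C D by (simp add: mult_left_mono)
    finally show ?thesis by simp
  qed
  then show ?thesis unfolding norm_bounded_def using C D by (intro exI[of _ "C * D"]) auto
qed

lemma bop_comp: assumes "bop f" "bop g" shows "bop (\<lambda>x. f (g x))"
  using bopI[OF clinear_comp[OF bop_clinear[OF assms(1)] bop_clinear[OF assms(2)]]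
      norm_bounded_comp[OF bop_norm_bounded[OF assms(1)] bop_norm_bounded[OF assms(2)]]] .

lemma norm_bounded_add: assumes "norm_bounded f" "norm_bounded g" shows "norm_bounded (\<lambda>x. f x + g x)"
proof -
  obtain C where C: "C \<ge> 0" "\<forall>x. hnorm (f x) \<le> C * hnorm x" using assms(1) by (auto simp: norm_bounded_def)
  obtain D where D: "D \<ge> 0" "\<forall>x. hnorm (g x) \<le> D * hnorm x" using assms(2) by (auto simp: norm_bounded_def)
  have "hnorm (f x + g x) \<le> (C + D) * hnorm x" for x
  proof -
    have "hnorm (f x + g x) \<le> hnorm (f x) + hnorm (g x)" by (rule hnorm_triangle)
    also have "\<dots> \<le> C * hnorm x + D * hnorm x" using C D by (meson add_mono)
    finally show ?thesis by (simp add: algebra_simps)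
  qed
  then show ?thesis unfolding norm_bounded_def using C D by (intro exI[of _ "C + D"]) auto
qed

lemma norm_bounded_scale: assumes "norm_bounded f" shows "norm_bounded (\<lambda>x. c *\<^sub>C f x)"
proof -
  obtain C where C: "C \<ge> 0" "\<forall>x. hnorm (f x) \<le> C * hnorm x" using assms(1) by (auto simp: norm_bounded_def)
  have "hnorm (c *\<^sub>C f x) \<le> (cmod c * C) * hnorm x" for x
    using C by (simp add: hnorm_scale mult_left_mono mult.assoc)
  then show ?thesis unfolding norm_bounded_def using C by (intro exI[of _ "cmod c * C"]) auto
qed

lemma norm_bounded_id: "norm_bounded (\<lambda>x. x)" unfolding norm_bounded_def by (intro exI[of _ 1]) auto

lemma norm_bounded_minus: "norm_bounded f \<Longrightarrow> norm_bounded (\<lambda>x. - f x)"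
  using norm_bounded_scale[of f "-1"] by simp

lemma norm_bounded_diff: "norm_bounded f \<Longrightarrow> norm_bounded g \<Longrightarrow> norm_bounded (\<lambda>x. f x - g x)"
  using norm_bounded_add[of f "\<lambda>x. - g x"] norm_bounded_minus[of g] by simp

lemma adjoint_clinear:
  assumes "\<And>h k. cinner h (B k) = cinner (T h) k"
  shows "clinear B"
  unfolding clinear_def
  by (intro conjI allI; rule cinner_ext) (simp_all add: assms cinner_add_right cinner_scale_right)

lemma adjoint_norm_le:
  assumes B: "\<And>h k. cinner h (B k) = cinner (T h) k"
    and T: "\<And>x. hnorm (T x) \<le> C * hnorm x" and C: "0 \<le> C"
  shows "hnorm (B k) \<le> C * hnorm k"
proof (cases "hnorm (B k) = 0")
  case True then show ?thesis using C hnorm_nonneg[of k] by simp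
next
  case False
  then have pos: "0 < hnorm (B k)" using hnorm_nonneg[of "B k"] by simp
  have "(hnorm (B k))\<^sup>2 = Re (cinner (T (B k)) k)" by (simp add: hnorm_sq nsq_def B)
  also have "\<dots> \<le> hnorm (T (B k)) * hnorm k"
    using complex_Re_le_cmod cauchy_schwarz order_trans by blast
  also have "\<dots> \<le> (C * hnorm (B k)) * hnorm k" using T hnorm_nonneg[of k] by (simp add: mult_right_mono)
  finally have "hnorm (B k) * hnorm (B k) \<le> hnorm (B k) * (C * hnorm k)"
    by (simp add: power2_eq_square algebra_simps)
  then show ?thesis using pos by simp
qed

lemma adjoint_exists:
  fixes T :: "'a::chilbert \<Rightarrow> 'b::chilbert"
  assumes T: "bop T"
  shows "\<exists>B. bop B \<and> (\<forall>h k. cinner h (B k) = cinner (T h) k)"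
proof -
  obtain C where C: "C \<ge> 0" "\<And>x. hnorm (T x) \<le> C * hnorm x"
    using bop_norm_bounded[OF T] by (auto simp: norm_bounded_def)
  have lin: "clinear T" using T by (rule bop_clinear)
  have "\<exists>w. \<forall>h. cinner (T h) k = cinner h w" for k
  proof (rule riesz[where C = "C * hnorm k"])
    show "cinner (T (x + y)) k = cinner (T x) k + cinner (T y) k" for x y
      by (simp add: clinear_add[OF lin] cinner_add_left)
    show "cinner (T (c *\<^sub>C x)) k = c * cinner (T x) k" for c x
      by (simp add: clinear_scale[OF lin] cinner_scale_left)
    show "cmod (cinner (T x) k) \<le> C * hnorm k * hnorm x" for x
    proof -
      have "cmod (cinner (T x) k) \<le> hnorm (T x) * hnorm k" by (rule cauchy_schwarz)
      also have "\<dots> \<le> (C * hnorm x) * hnorm k" using C hnorm_nonneg[of k] by (simp add: mult_right_mono)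
      finally show ?thesis by (simp add: algebra_simps)
    qed
  qed
  then obtain B where B: "\<And>h k. cinner h (B k) = cinner (T h) k" by metis
  have "norm_bounded B"
    unfolding norm_bounded_def using adjoint_norm_le[OF B C(2) C(1)] C(1) by blast
  then show ?thesis using adjoint_clinear[OF B] B bopI by blast
qed

lemma inv_eq_two_sided:
  assumes "\<And>x. g (f x) = x" "\<And>y. f (g y) = y"
  shows "inv f = g"
proof
  have inj: "inj f" by (metis assms(1) injI)
  fix y show "inv f y = g y" using inv_f_f[OF inj, of "g y"] assms(2) by simp
qed

lemma binvertible_inv:
  assumes "binvertible T"
  shows "bop (inv T)" "inv T (T x) = x" "T (inv T y) = y"
proof -
  obtain B where B: "bop B" "\<And>x. B (T x) = x" "\<And>y. T (B y) = y"
    using assms unfolding binvertible_def by blast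
  moreover have "inv T = B" using B(2,3) by (rule inv_eq_two_sided)
  ultimately show "bop (inv T)" "inv T (T x) = x" "T (inv T y) = y" by simp_all
qed

section \<open>Krein spaces and self-adjoint operators\<close>

locale krein_space =
  fixes J :: "'k::chilbert \<Rightarrow> 'k"
  assumes J_bop: "bop J"
    and J_involution [simp]: "J (J x) = x"
    and J_symmetric: "cinner (J x) y = cinner x (J y)"
begin

abbreviation kin (infix "\<bullet>\<bullet>" 70) where "x \<bullet>\<bullet> y \<equiv> kinner J x y"

lemma J_clinear: "clinear J" using J_bop by (rule bop_clinear)

lemma kinner_commute: "y \<bullet>\<bullet> x = cnj (x \<bullet>\<bullet> y)"
  unfolding kinner_def by (simp add: J_symmetric flip: cinner_commute)

lemma kinner_add_left: "(x + y) \<bullet>\<bullet> z = x \<bullet>\<bullet> z + y \<bullet>\<bullet> z"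
  unfolding kinner_def by (simp add: clinear_add[OF J_clinear] cinner_add_left)
lemma kinner_add_right: "z \<bullet>\<bullet> (x + y) = z \<bullet>\<bullet> x + z \<bullet>\<bullet> y"
  unfolding kinner_def by (simp add: cinner_add_right)
lemma kinner_diff_left: "(x - y) \<bullet>\<bullet> z = x \<bullet>\<bullet> z - y \<bullet>\<bullet> z"
  unfolding kinner_def by (simp add: clinear_diff[OF J_clinear] cinner_diff_left)
lemma kinner_diff_right: "z \<bullet>\<bullet> (x - y) = z \<bullet>\<bullet> x - z \<bullet>\<bullet> y"
  unfolding kinner_def by (simp add: cinner_diff_right)
lemma kinner_scale_left: "(c *\<^sub>C x) \<bullet>\<bullet> z = c * (x \<bullet>\<bullet> z)"
  unfolding kinner_def by (simp add: clinear_scale[OF J_clinear] cinner_scale_left)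
lemma kinner_scale_right: "z \<bullet>\<bullet> (c *\<^sub>C x) = cnj c * (z \<bullet>\<bullet> x)"
  unfolding kinner_def by (simp add: cinner_scale_right)
lemma kinner_minus_left: "(- x) \<bullet>\<bullet> z = - (x \<bullet>\<bullet> z)"
  unfolding kinner_def by (simp add: clinear_minus[OF J_clinear] cinner_minus_left)

lemmas kinner_simps = kinner_add_left kinner_add_right kinner_diff_left kinner_diff_right
  kinner_scale_left kinner_scale_right

lemma kinner_ext_right: assumes "\<And>a. a \<bullet>\<bullet> u = a \<bullet>\<bullet> v" shows "u = v"
proof (rule cinner_ext)
  fix h show "cinner h u = cinner h v" using assms[of "J h"] by (simp add: kinner_def)
qed

lemma kinner_ext_left: assumes "\<And>a. u \<bullet>\<bullet> a = v \<bullet>\<bullet> a" shows "u = v"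
  by (rule kinner_ext_right) (metis assms kinner_commute)

lemma padj_unique:
  assumes "\<forall>h k. cinner h (B k) = G h \<bullet>\<bullet> k"
  shows "padj J G = B"
  unfolding padj_def
proof (rule the_equality)
  show "\<forall>h k. cinner h (B k) = G h \<bullet>\<bullet> k" by (rule assms)
next
  fix B' assume "\<forall>h k. cinner h (B' k) = G h \<bullet>\<bullet> k"
  then show "B' = B" using assms by (intro ext cinner_ext) simp
qed

lemma padj:
  fixes G :: "'h::chilbert \<Rightarrow> 'k"
  assumes "bop G"
  shows "bop (padj J G)" "cinner h (padj J G k) = G h \<bullet>\<bullet> k"
proof -
  obtain B where B: "bop B" "\<forall>h k. cinner h (B k) = cinner (J (G h)) k"
    using adjoint_exists[OF bop_comp[OF J_bop assms]] by blast
  then have "\<forall>h k. cinner h (B k) = G h \<bullet>\<bullet> k" by (simp add: kinner_def)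
  with B(1) show "bop (padj J G)" "cinner h (padj J G k) = G h \<bullet>\<bullet> k"
    by (simp_all add: padj_unique)
qed

end

lemma pontryagin_krein_space: "pontryagin J \<Longrightarrow> krein_space J"
  unfolding pontryagin_def by unfold_locales auto

definition is_resolvent :: "('a::cvec \<Rightarrow> 'a) \<Rightarrow> complex \<Rightarrow> ('a \<Rightarrow> 'a) \<Rightarrow> bool" where
  "is_resolvent A z R \<longleftrightarrow> clinear R \<and> (\<forall>x. R (A x - z *\<^sub>C x) = x) \<and> (\<forall>y. A (R y) - z *\<^sub>C R y = y)"

lemma is_resolvent_clinear: "is_resolvent A z R \<Longrightarrow> clinear R"
  by (simp add: is_resolvent_def)

lemma is_resolvent_inj: "is_resolvent A z R \<Longrightarrow> R a = R b \<Longrightarrow> a = b"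
  by (metis is_resolvent_def)

lemma is_resolvent_apply: "is_resolvent A z R \<Longrightarrow> A (R y) = y + z *\<^sub>C R y"
  unfolding is_resolvent_def by (metis diff_eq_eq)

lemma cresolvent_is_resolvent:
  assumes "z \<in> cres A"
  shows "is_resolvent A z (cresolvent A z)" "bop (cresolvent A z)"
proof -
  note inv = binvertible_inv[of "\<lambda>x. A x - z *\<^sub>C x"]
  show "bop (cresolvent A z)" using assms inv(1) by (simp add: cres_def cresolvent_def)
  then show "is_resolvent A z (cresolvent A z)"
    using assms inv(2,3) by (simp add: is_resolvent_def cres_def cresolvent_def bop_clinear)
qed

lemma resolvent_identity:
  assumes A: "clinear A" and z: "is_resolvent A z Rz" and w: "is_resolvent A w Rw"
  shows "Rz y - Rw y = (z - w) *\<^sub>C Rz (Rw y)"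
proof -
  define v where "v = Rz y - Rw y"
  have "A v - z *\<^sub>C v = (z - w) *\<^sub>C Rw y"
    by (simp add: v_def clinear_diff[OF A] is_resolvent_apply[OF z] is_resolvent_apply[OF w]
        cscale_diff_right cscale_diff_left algebra_simps)
  then have "Rz (A v - z *\<^sub>C v) = Rz ((z - w) *\<^sub>C Rw y)" by simp
  then show ?thesis
    using z by (simp add: is_resolvent_def v_def clinear_scale[OF is_resolvent_clinear[OF z]])
qed

lemma resolvent_identity':
  assumes "clinear A" and "is_resolvent A z Rz" and "is_resolvent A w Rw"
  shows "Rz y - Rw y = (z - w) *\<^sub>C Rw (Rz y)"
  using resolvent_identity[OF assms(1,3,2), of y]
  by (metis cscale_minus_left minus_diff_eq)

locale selfadjoint_operator = krein_space J for J :: "'k::chilbert \<Rightarrow> 'k" +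
  fixes A :: "'k \<Rightarrow> 'k"
  assumes A_bop: "bop A"
    and A_selfadjoint: "A x \<bullet>\<bullet> y = x \<bullet>\<bullet> A y"
begin

lemma A_clinear: "clinear A" using A_bop by (rule bop_clinear)

lemma cresolvent_adjoint:
  assumes "z \<in> cres A"
  shows "is_resolvent A (cnj z) (cresolvent A (cnj z))"
    and "cresolvent A z x \<bullet>\<bullet> y = x \<bullet>\<bullet> cresolvent A (cnj z) y"
proof -
  define R where "R = cresolvent A z"
  note R = cresolvent_is_resolvent[OF assms, folded R_def]
  obtain B where B: "bop B" "\<forall>h k. cinner h (B k) = cinner (J (R h)) k"
    using adjoint_exists[OF bop_comp[OF J_bop R(2)]] by blast
  define R' where "R' = (\<lambda>y. J (B y))"
  have adj: "R x \<bullet>\<bullet> y = x \<bullet>\<bullet> R' y" for x y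
    using B(2) by (simp add: R'_def kinner_def J_symmetric)
  have right: "A (R' y) - cnj z *\<^sub>C R' y = y" for y
  proof (rule kinner_ext_right)
    fix a
    have "a \<bullet>\<bullet> (A (R' y) - cnj z *\<^sub>C R' y) = (A a - z *\<^sub>C a) \<bullet>\<bullet> R' y"
      by (simp add: kinner_simps A_selfadjoint)
    also have "\<dots> = a \<bullet>\<bullet> y" using R(1) by (simp add: is_resolvent_def flip: adj)
    finally show "a \<bullet>\<bullet> (A (R' y) - cnj z *\<^sub>C R' y) = a \<bullet>\<bullet> y" .
  qed
  have left: "R' (A x - cnj z *\<^sub>C x) = x" for x
  proof (rule kinner_ext_right)
    fix a
    have "a \<bullet>\<bullet> R' (A x - cnj z *\<^sub>C x) = (A (R a) - z *\<^sub>C R a) \<bullet>\<bullet> x"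
      by (simp add: flip: adj) (simp add: kinner_simps A_selfadjoint)
    also have "\<dots> = a \<bullet>\<bullet> x" using R(1) by (simp add: is_resolvent_def)
    finally show "a \<bullet>\<bullet> R' (A x - cnj z *\<^sub>C x) = a \<bullet>\<bullet> x" .
  qed
  have "cresolvent A (cnj z) = R'"
    unfolding cresolvent_def using left right by (rule inv_eq_two_sided)
  moreover have "clinear R'"
    unfolding R'_def using J_clinear bop_clinear[OF B(1)] by (rule clinear_comp)
  ultimately show "is_resolvent A (cnj z) (cresolvent A (cnj z))"
    and "cresolvent A z x \<bullet>\<bullet> y = x \<bullet>\<bullet> cresolvent A (cnj z) y"
    using left right adj by (simp_all add: is_resolvent_def R_def)
qed

end

section \<open>Linear relations given by a resolvent\<close>

lemma resolvent_graph_mem_iff: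
  assumes "rinv (rshift T z) = ograph R"
  shows "(a, b) \<in> T \<longleftrightarrow> a = R (b - z *\<^sub>C a)"
proof
  assume "(a, b) \<in> T"
  then have "(b - z *\<^sub>C a, a) \<in> rinv (rshift T z)" unfolding rinv_def rshift_def by blast
  then show "a = R (b - z *\<^sub>C a)" using assms unfolding ograph_def by blast
next
  assume "a = R (b - z *\<^sub>C a)"
  then have "(b - z *\<^sub>C a, a) \<in> rinv (rshift T z)" using assms unfolding ograph_def by blast
  then obtain a' b' where "(a', b') \<in> T" "a = a'" "b - z *\<^sub>C a = b' - z *\<^sub>C a'"
    unfolding rinv_def rshift_def by blast
  then show "(a, b) \<in> T" by simp
qed

lemma linrel_of_resolvent_graph:
  assumes T: "rinv (rshift T z) = ograph R" and R: "clinear R"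
  shows "linrel T"
  unfolding linrel_def resolvent_graph_mem_iff[OF T]
proof (intro conjI allI impI)
  show "0 = R (0 - z *\<^sub>C 0)" by (simp add: clinear_zero[OF R])
  fix x y u v assume x: "x = R (y - z *\<^sub>C x)" and u: "u = R (v - z *\<^sub>C u)"
  have "R ((y - z *\<^sub>C x) + (v - z *\<^sub>C u)) = x + u" by (simp only: clinear_add[OF R] flip: x u)
  moreover have "(y + v) - z *\<^sub>C (x + u) = (y - z *\<^sub>C x) + (v - z *\<^sub>C u)"
    by (simp add: cscale_add_right algebra_simps)
  ultimately show "x + u = R (y + v - z *\<^sub>C (x + u))" by metis
next
  fix c x y assume x: "x = R (y - z *\<^sub>C x)"
  have "R (c *\<^sub>C (y - z *\<^sub>C x)) = c *\<^sub>C x" by (simp only: clinear_scale[OF R] flip: x)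
  moreover have "c *\<^sub>C y - z *\<^sub>C (c *\<^sub>C x) = c *\<^sub>C (y - z *\<^sub>C x)"
    by (simp only: cscale_diff_right cscale_mult mult.commute)
  ultimately show "c *\<^sub>C x = R (c *\<^sub>C y - z *\<^sub>C (c *\<^sub>C x))" by metis
qed

lemma rresolvent_of_graph:
  assumes "rinv (rshift T z) = ograph R"
  shows "rresolvent T z = R"
  unfolding rresolvent_def
proof (rule the_equality)
  fix R' assume "rinv (rshift T z) = ograph R'"
  then have graph: "ograph R' = ograph R" using assms by simp
  show "R' = R"
  proof
    fix x
    have "(x, R' x) \<in> ograph R" using graph by (auto simp: ograph_def)
    then show "R' x = R x" by (auto simp: ograph_def)
  qed
qed (rule assms)

lemma mulpart_of_resolvent_graph:
  assumes "rinv (rshift T z) = ograph R"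
  shows "mulpart T = {x. R x = 0}" and "rker (rinv (rshift T z)) = {x. R x = 0}"
  using assms by (auto simp: mulpart_def rker_def ograph_def resolvent_graph_mem_iff[OF assms])

context krein_space
begin

lemma resolvent_graph_symmetric:
  assumes T: "rinv (rshift T z) = ograph R"
    and adj: "\<And>x y. R x \<bullet>\<bullet> y = x \<bullet>\<bullet> R' y"
    and identity: "\<And>y. R' y - R y = (cnj z - z) *\<^sub>C R' (R y)"
  shows "T \<subseteq> radj J T"
proof safe
  fix h k assume "(h, k) \<in> T"
  have "k \<bullet>\<bullet> f = h \<bullet>\<bullet> g" if "(f, g) \<in> T" for f g
  proof -
    define a where "a = k - z *\<^sub>C h"
    define x where "x = g - z *\<^sub>C f"
    have h: "h = R a" using \<open>(h, k) \<in> T\<close> by (simp add: resolvent_graph_mem_iff[OF T] a_def)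
    have f: "f = R x" using that by (simp add: resolvent_graph_mem_iff[OF T] x_def)
    have "R' x = R x + (cnj z - z) *\<^sub>C R' (R x)"
      using identity[of x] by (simp add: algebra_simps)
    then have "a \<bullet>\<bullet> R' x = a \<bullet>\<bullet> R x + (z - cnj z) * (h \<bullet>\<bullet> f)"
      by (simp add: kinner_add_right kinner_scale_right h f adj)
    moreover have "k = a + z *\<^sub>C h" "g = x + z *\<^sub>C f" by (simp_all add: a_def x_def)
    ultimately show ?thesis
      by (simp add: kinner_simps algebra_simps) (simp add: h f adj)
  qed
  then show "(h, k) \<in> radj J T" unfolding radj_def by simp
qed

lemma radj_subset_resolvent_graph:
  assumes T: "rinv (rshift T z) = ograph R" and R: "clinear R"
    and adj: "\<And>x y. R x \<bullet>\<bullet> y = x \<bullet>\<bullet> R' y"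
    and identity: "\<And>y. R y - R' y = (z - cnj z) *\<^sub>C R (R' y)"
  shows "radj J T \<subseteq> T"
proof safe
  fix h k assume "(h, k) \<in> radj J T"
  then have rel: "k \<bullet>\<bullet> f = h \<bullet>\<bullet> g" if "(f, g) \<in> T" for f g
    using that unfolding radj_def by blast
  define w where "w = k - cnj z *\<^sub>C h"
  have "R' w \<bullet>\<bullet> x = h \<bullet>\<bullet> x" for x
  proof -
    have "(R x, x + z *\<^sub>C R x) \<in> T" by (simp add: resolvent_graph_mem_iff[OF T])
    then have "k \<bullet>\<bullet> R x = h \<bullet>\<bullet> x + cnj z * (h \<bullet>\<bullet> R x)"
      using rel by (simp add: kinner_add_right kinner_scale_right)
    then have "w \<bullet>\<bullet> R x = h \<bullet>\<bullet> x" by (simp add: w_def kinner_diff_left kinner_scale_left)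
    then show ?thesis by (metis adj kinner_commute)
  qed
  then have w: "R' w = h" by (rule kinner_ext_left)
  have "k - z *\<^sub>C h = w + (cnj z - z) *\<^sub>C R' w"
    unfolding w by (simp add: w_def cscale_diff_left algebra_simps)
  then have "R (k - z *\<^sub>C h) = R w + (cnj z - z) *\<^sub>C R (R' w)"
    by (simp add: clinear_add[OF R] clinear_scale[OF R])
  also have "\<dots> = R' w"
    using identity[of w] by (simp add: algebra_simps cscale_diff_left)
  finally show "(h, k) \<in> T" using w by (simp add: resolvent_graph_mem_iff[OF T])
qed

end

section \<open>The Q-function and the invertibility of \<open>Q(z\<^sub>0)\<close>\<close>

locale q_function = selfadjoint_operator J A for J :: "'k::chilbert \<Rightarrow> 'k" and A +
  fixes P At :: "'k \<Rightarrow> 'k"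
    and G0 :: "'h::chilbert \<Rightarrow> 'k"
    and Q :: "complex \<Rightarrow> 'h \<Rightarrow> 'h"
    and z0 :: complex
  assumes G0_bounded: "bop G0"
    and G0_inv: "binvertible (padj J G0 \<circ> G0)"
    and Q_def: "\<forall>z. Q z = padj J G0 \<circ> cresolvent A z \<circ> G0"
    and P_def: "P = G0 \<circ> inv (padj J G0 \<circ> G0) \<circ> padj J G0"
    and At_def: "At = (\<lambda>x. x - P x) \<circ> A \<circ> (\<lambda>x. x - P x)"
    and z0_A: "z0 \<in> cres A"
    and z0_At: "z0 \<in> res_on (range (\<lambda>x. x - P x)) At"
begin

abbreviation "G0p \<equiv> padj J G0"
abbreviation "Sinv \<equiv> inv (G0p \<circ> G0)"
abbreviation "R0 \<equiv> cresolvent A z0"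
abbreviation "Rc \<equiv> cresolvent A (cnj z0)"

lemma G0_clinear: "clinear G0" using G0_bounded by (rule bop_clinear)

lemma G0p: "bop G0p" "cinner h (G0p k) = G0 h \<bullet>\<bullet> k"
  using padj[OF G0_bounded] by auto

lemma G0p_clinear: "clinear G0p" using G0p(1) by (rule bop_clinear)

lemma cinner_G0p_left: "cinner (G0p k) h = k \<bullet>\<bullet> G0 h"
  by (metis G0p(2) cinner_commute kinner_commute)

lemma Sinv: "bop Sinv" "Sinv (G0p (G0 h)) = h" "G0p (G0 (Sinv k)) = k"
  using binvertible_inv[OF G0_inv] by auto

lemma Sinv_clinear: "clinear Sinv" using Sinv(1) by (rule bop_clinear)

lemma G0_eq_0_iff: "G0 h = 0 \<longleftrightarrow> h = 0"
  by (metis Sinv(2) clinear_zero G0p_clinear Sinv_clinear G0_clinear)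

lemma R0: "is_resolvent A z0 R0" "bop R0"
  using cresolvent_is_resolvent[OF z0_A] by auto

lemma R0_clinear: "clinear R0" using R0(1) by (rule is_resolvent_clinear)

lemma Rc: "is_resolvent A (cnj z0) Rc" and R0_adjoint: "R0 x \<bullet>\<bullet> y = x \<bullet>\<bullet> Rc y"
  using cresolvent_adjoint[OF z0_A] by auto

lemma Rc_clinear: "clinear Rc" using Rc by (rule is_resolvent_clinear)

lemma Q_apply: "Q z h = G0p (cresolvent A z (G0 h))" by (simp add: Q_def)

lemma P_apply: "P x = G0 (Sinv (G0p x))" by (simp add: P_def)

lemma P_bop: "bop P"
  unfolding P_apply[abs_def] using G0_bounded bop_comp[OF Sinv(1) G0p(1)] by (rule bop_comp)

lemma G0p_P: "G0p (P x) = G0p x" by (simp add: P_apply Sinv)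
lemma P_G0: "P (G0 h) = G0 h" by (simp add: P_apply Sinv)
lemma P_idem: "P (P x) = P x" by (simp add: P_apply Sinv)

lemma range_P: "range P = range G0"
proof
  show "range P \<subseteq> range G0" by (auto simp: P_apply)
  show "range G0 \<subseteq> range P" by (metis P_G0 image_subsetI rangeI)
qed

definition Pc :: "'k \<Rightarrow> 'k" where "Pc x = x - P x"

lemma Pc_clinear: "clinear Pc"
  unfolding clinear_def Pc_def using bop_clinear[OF P_bop]
  by (simp add: clinear_add clinear_scale cscale_diff_right algebra_simps)

lemma Pc_idem: "Pc (Pc x) = Pc x"
  unfolding Pc_def by (simp add: clinear_diff[OF bop_clinear[OF P_bop]] P_idem)
lemma G0p_Pc: "G0p (Pc x) = 0" unfolding Pc_def by (simp add: clinear_diff[OF G0p_clinear] G0p_P)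
lemma Pc_G0: "Pc (G0 h) = 0" unfolding Pc_def by (simp add: P_G0)

lemma Pc_range: "y \<in> range Pc \<Longrightarrow> Pc y = y" using Pc_idem by auto

definition A0 :: "'k \<Rightarrow> 'k" where "A0 v = A v - z0 *\<^sub>C v"
definition At0 :: "'k \<Rightarrow> 'k" where "At0 x = At x - z0 *\<^sub>C x"

lemma At_apply: "At x = Pc (A (Pc x))" by (simp add: At_def Pc_def)

lemma A0_clinear: "clinear A0"
  unfolding clinear_def A0_def
  by (simp add: clinear_rules[OF A_clinear] cscale_add_right cscale_diff_right cscale_mult
      algebra_simps mult.commute)

lemma At0_on_range_Pc: assumes "y \<in> range Pc" shows "At0 y = Pc (A0 y)"
  using Pc_range[OF assms] by (simp add: At0_def At_apply A0_def clinear_rules[OF Pc_clinear])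

lemma At0_bij: "bij_betw At0 (range Pc) (range Pc)"
  using z0_At unfolding res_on_def At0_def[abs_def] Pc_def[abs_def] by simp

definition At0_solve :: "'k \<Rightarrow> 'k" where "At0_solve v = inv_into (range Pc) At0 (Pc v)"

lemma At0_solve: "At0_solve v \<in> range Pc" "At0 (At0_solve v) = Pc v"
  using At0_bij unfolding At0_solve_def bij_betw_def
  by (auto intro: inv_into_into f_inv_into_f)

lemma At0_solve_norm_bounded: "norm_bounded At0_solve"
proof -
  obtain C where C: "\<forall>y\<in>range Pc. hnorm (inv_into (range Pc) At0 y) \<le> C * hnorm y"
    using z0_At unfolding res_on_def At0_def[abs_def] Pc_def[abs_def] by auto
  obtain D where D: "D \<ge> 0" "\<forall>x. hnorm (Pc x) \<le> D * hnorm x"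
    using norm_bounded_diff[OF norm_bounded_id bop_norm_bounded[OF P_bop]]
    by (auto simp: norm_bounded_def Pc_def)
  have "hnorm (At0_solve v) \<le> (max C 0 * D) * hnorm v" for v
  proof -
    have "hnorm (At0_solve v) \<le> max C 0 * hnorm (Pc v)"
      using C hnorm_nonneg[of "Pc v"] unfolding At0_solve_def
      by (metis (no_types, lifting) max.cobounded1 mult_right_mono order_trans rangeI)
    also have "\<dots> \<le> max C 0 * (D * hnorm v)" using D by (simp add: mult_left_mono)
    finally show ?thesis by simp
  qed
  then show ?thesis unfolding norm_bounded_def using D by (intro exI[of _ "max C 0 * D"]) auto
qed

lemma Q0_clinear: "clinear (Q z0)"
  unfolding Q_apply[abs_def]
  using G0p_clinear clinear_comp[OF R0_clinear G0_clinear] by (rule clinear_comp)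

lemma Q0_injective: assumes "Q z0 h = 0" shows "h = 0"
proof -
  define x where "x = R0 (G0 h)"
  have "P x = 0" using assms by (simp add: Q_apply x_def P_apply clinear_rules[OF Sinv_clinear]
      clinear_rules[OF G0_clinear])
  then have x: "x \<in> range Pc" by (metis Pc_def diff_zero rangeI)
  have A0x: "A0 x = G0 h" using R0(1) by (simp add: is_resolvent_def x_def A0_def)
  have "0 \<in> range Pc" by (metis Pc_G0 rangeI)
  moreover have "At0 x = At0 0"
    using At0_on_range_Pc[OF x] A0x Pc_G0
    by (simp add: At0_def At_apply clinear_rules[OF A_clinear] clinear_rules[OF Pc_clinear])
  ultimately have "x = 0" using At0_bij x by (metis bij_betw_imp_inj_on inj_onD)
  then have "G0 h = 0" using A0x by (simp add: A0_def clinear_zero[OF A_clinear])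
  then show ?thesis by (simp add: G0_eq_0_iff)
qed

text \<open>To solve \<open>Q(z\<^sub>0) h = k\<close>, put \<open>x = \<Gamma>\<^sub>0(\<Gamma>\<^sub>0\<^sup>+\<Gamma>\<^sub>0)\<^sup>-\<^sup>1k + y\<close> with \<open>y \<in> (I - P)K\<close> chosen such
  that \<open>(I - P)(A - z\<^sub>0)x = 0\<close>. Then \<open>(A - z\<^sub>0)x = \<Gamma>\<^sub>0h\<close> with
  \<open>h = (\<Gamma>\<^sub>0\<^sup>+\<Gamma>\<^sub>0)\<^sup>-\<^sup>1\<Gamma>\<^sub>0\<^sup>+(A - z\<^sub>0)x\<close>, and \<open>Q(z\<^sub>0)h = \<Gamma>\<^sub>0\<^sup>+x = k\<close> because \<open>\<Gamma>\<^sub>0\<^sup>+y = 0\<close>.\<close>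
definition Q0_inverse :: "'h \<Rightarrow> 'h" where
  "Q0_inverse k = Sinv (G0p (A0 (G0 (Sinv k) + At0_solve (- A0 (G0 (Sinv k))))))"

lemma Q0_Q0_inverse: "Q z0 (Q0_inverse k) = k"
proof -
  define u where "u = Sinv k"
  define y where "y = At0_solve (- A0 (G0 u))"
  define x where "x = G0 u + y"
  have "Pc (A0 y) = - Pc (A0 (G0 u))"
    using At0_solve[of "- A0 (G0 u)"] At0_on_range_Pc
    by (simp add: y_def clinear_minus[OF Pc_clinear])
  then have "Pc (A0 x) = 0"
    by (simp add: x_def clinear_add[OF A0_clinear] clinear_add[OF Pc_clinear])
  then have A0x: "A0 x = G0 (Q0_inverse k)"
    by (simp add: Pc_def P_apply Q0_inverse_def x_def y_def u_def)
  have "R0 (G0 (Q0_inverse k)) = x" using R0(1) A0x[symmetric] by (simp add: is_resolvent_def A0_def)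
  then have "Q z0 (Q0_inverse k) = G0p (G0 u) + G0p y"
    by (simp add: Q_apply x_def clinear_add[OF G0p_clinear])
  also have "G0p y = 0" using At0_solve(1)[of "- A0 (G0 u)"] G0p_Pc by (auto simp: y_def)
  finally show ?thesis by (simp add: u_def Sinv)
qed

lemma Q0_inverse_Q0: "Q0_inverse (Q z0 h) = h"
  using Q0_injective[of "Q0_inverse (Q z0 h) - h"]
  by (simp add: clinear_diff[OF Q0_clinear] Q0_Q0_inverse)

lemma Q0_inverse_norm_bounded: "norm_bounded Q0_inverse"
proof -
  have A0: "norm_bounded A0"
    using norm_bounded_diff[OF bop_norm_bounded[OF A_bop] norm_bounded_scale[OF norm_bounded_id, of z0]]
    by (simp add: A0_def[abs_def])
  have GS: "norm_bounded (\<lambda>k. G0 (Sinv k))"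
    by (rule norm_bounded_comp[OF bop_norm_bounded[OF G0_bounded] bop_norm_bounded[OF Sinv(1)]])
  have "norm_bounded (\<lambda>k. At0_solve (- A0 (G0 (Sinv k))))"
    by (rule norm_bounded_comp[OF At0_solve_norm_bounded norm_bounded_minus[OF norm_bounded_comp[OF A0 GS]]])
  then have "norm_bounded (\<lambda>k. A0 (G0 (Sinv k) + At0_solve (- A0 (G0 (Sinv k)))))"
    by (rule norm_bounded_comp[OF A0 norm_bounded_add[OF GS]])
  then show ?thesis
    unfolding Q0_inverse_def[abs_def]
    by (intro norm_bounded_comp[OF bop_norm_bounded[OF Sinv(1)]]
        norm_bounded_comp[OF bop_norm_bounded[OF G0p(1)]])
qed

abbreviation "Qi0 \<equiv> inv (Q z0)"

lemma Qi0: "Q z0 (Qi0 k) = k" "Qi0 (Q z0 h) = h" "clinear Qi0" "bop Qi0"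
proof -
  have eq: "Qi0 = Q0_inverse" using Q0_inverse_Q0 Q0_Q0_inverse by (rule inv_eq_two_sided)
  show "Q z0 (Qi0 k) = k" "Qi0 (Q z0 h) = h" by (simp_all add: eq Q0_Q0_inverse Q0_inverse_Q0)
  show lin: "clinear Qi0"
    using Q0_clinear by (rule clinear_inverse) (simp_all add: eq Q0_Q0_inverse Q0_inverse_Q0)
  show "bop Qi0" using lin Q0_inverse_norm_bounded by (simp add: eq bopI)
qed

abbreviation "Qc \<equiv> Q (cnj z0)"
abbreviation "Qic \<equiv> inv (Q (cnj z0))"

lemma Q0_adjoint: "cinner (Q z0 h) g = cinner h (Qc g)"
  by (simp add: Q_apply cinner_G0p_left R0_adjoint G0p(2))

text \<open>\<open>Q(\<bar>z\<^sub>0)\<close> is the Hilbert-space adjoint of \<open>Q(z\<^sub>0)\<close>, so its inverse is the adjoint of \<open>Q(z\<^sub>0)\<^sup>-\<^sup>1\<close>.\<close>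
lemma Qic: "Qc (Qic k) = k" "Qic (Qc h) = h" "clinear Qic" "cinner (Qi0 h) g = cinner h (Qic g)"
proof -
  obtain V where V: "bop V" "\<forall>h k. cinner h (V k) = cinner (Qi0 h) k"
    using adjoint_exists[OF Qi0(4)] by blast
  have right: "Qc (V g) = g" for g
    by (rule cinner_ext) (simp add: V(2) Qi0(2) flip: Q0_adjoint)
  have left: "V (Qc g) = g" for g
  proof (rule cinner_ext)
    fix h
    have "cinner h (V (Qc g)) = cinner (Qi0 h) (Qc g)" using V(2) by simp
    also have "\<dots> = cinner h g" by (simp add: Qi0(1) flip: Q0_adjoint)
    finally show "cinner h (V (Qc g)) = cinner h g" .
  qed
  have eq: "Qic = V" using left right by (rule inv_eq_two_sided)
  show "Qc (Qic k) = k" "Qic (Qc h) = h" using left right eq by simp_all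
  show "clinear Qic" using eq V(1) bop_clinear by simp
  show "cinner (Qi0 h) g = cinner h (Qic g)" using eq V(2) by simp
qed

section \<open>Krein's resolvent formula\<close>

definition krein_resolvent :: "('k \<Rightarrow> 'k) \<Rightarrow> ('h \<Rightarrow> 'h) \<Rightarrow> 'k \<Rightarrow> 'k" where
  "krein_resolvent R Qi y = R y - R (G0 (Qi (G0p (R y))))"

lemma krein_resolvent_clinear:
  assumes "clinear R" "clinear Qi"
  shows "clinear (krein_resolvent R Qi)"
proof -
  have "clinear (\<lambda>y. R (G0 (Qi (G0p (R y)))))"
    using assms(1) clinear_comp[OF G0_clinear clinear_comp[OF assms(2) clinear_comp[OF G0p_clinear assms(1)]]]
    by (rule clinear_comp)
  then show ?thesis using assms(1) unfolding clinear_def krein_resolvent_def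
    by (simp add: cscale_diff_right algebra_simps)
qed

lemma krein_resolvent_G0:
  assumes "\<And>h. Qi (G0p (R (G0 h))) = h"
  shows "krein_resolvent R Qi (G0 h) = 0"
  by (simp add: krein_resolvent_def assms)

text \<open>The key point is \<open>\<Gamma>\<^sub>0\<^sup>+\<hat>R(w) = 0\<close>.\<close>
lemma krein_resolvent_identity:
  assumes z: "is_resolvent A z Rz" and w: "is_resolvent A w Rw" and lz: "clinear Qiz"
    and qz: "\<And>h. Qiz (G0p (Rz (G0 h))) = h" and qw: "\<And>k. G0p (Rw (G0 (Qiw k))) = k"
  shows "krein_resolvent Rz Qiz y - krein_resolvent Rw Qiw y
    = (z - w) *\<^sub>C krein_resolvent Rz Qiz (krein_resolvent Rw Qiw y)"
proof -
  note L = clinear_rules[OF is_resolvent_clinear[OF z]] clinear_rules[OF is_resolvent_clinear[OF w]]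
    clinear_rules[OF lz] clinear_rules[OF G0p_clinear] clinear_rules[OF G0_clinear]
  define u where "u = Qiw (G0p (Rw y))"
  define v where "v = krein_resolvent Rw Qiw y"
  have v: "v = Rw y - Rw (G0 u)" by (simp add: v_def u_def krein_resolvent_def)
  have G0p_v: "G0p v = 0" by (simp add: v L u_def qw)
  have ri: "(z - w) *\<^sub>C Rz (Rw x) = Rz x - Rw x" for x
    using resolvent_identity[OF A_clinear z w, of x] by simp
  have Rz_v: "(z - w) *\<^sub>C Rz v = Rz y - Rz (G0 u) - v"
    by (simp add: v L cscale_diff_right ri)
  have Qiz_v: "Qiz (G0p ((z - w) *\<^sub>C Rz v)) = Qiz (G0p (Rz y)) - u"
    unfolding Rz_v by (simp only: L G0p_v qz) simp
  have "(z - w) *\<^sub>C krein_resolvent Rz Qiz v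
      = (z - w) *\<^sub>C Rz v - Rz (G0 (Qiz (G0p ((z - w) *\<^sub>C Rz v))))"
    by (simp add: krein_resolvent_def cscale_diff_right L)
  also have "\<dots> = krein_resolvent Rz Qiz y - v"
    by (simp only: Qiz_v) (simp add: Rz_v L krein_resolvent_def)
  finally have "(z - w) *\<^sub>C krein_resolvent Rz Qiz v = krein_resolvent Rz Qiz y - v" .
  then show ?thesis by (simp add: v_def)
qed

abbreviation "Rh0 \<equiv> krein_resolvent R0 Qi0"
abbreviation "Rhc \<equiv> krein_resolvent Rc Qic"

lemma Rh0_clinear: "clinear Rh0" using R0_clinear Qi0(3) by (rule krein_resolvent_clinear)

lemma Rh0_Rhc: "Rh0 y - Rhc y = (z0 - cnj z0) *\<^sub>C Rh0 (Rhc y)"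
  by (rule krein_resolvent_identity[OF R0(1) Rc Qi0(3)]) (simp_all add: Qic(1) Qi0(2) flip: Q_apply)

lemma Rhc_Rh0: "Rhc y - Rh0 y = (cnj z0 - z0) *\<^sub>C Rhc (Rh0 y)"
  by (rule krein_resolvent_identity[OF Rc R0(1) Qic(3)]) (simp_all add: Qic(2) Qi0(1) flip: Q_apply)

lemma Rh0_adjoint: "Rh0 x \<bullet>\<bullet> y = x \<bullet>\<bullet> Rhc y"
proof -
  define q where "q = Qi0 (G0p (R0 x))"
  define s where "s = Qic (G0p (Rc y))"
  have "R0 (G0 q) \<bullet>\<bullet> y = cinner q (G0p (Rc y))" by (simp add: R0_adjoint G0p(2))
  also have "\<dots> = cinner (G0p (R0 x)) s" by (simp add: q_def s_def Qic(4))
  also have "\<dots> = x \<bullet>\<bullet> Rc (G0 s)" by (simp add: cinner_G0p_left R0_adjoint)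
  finally have "R0 (G0 q) \<bullet>\<bullet> y = x \<bullet>\<bullet> Rc (G0 s)" .
  then show ?thesis
    by (simp add: krein_resolvent_def q_def s_def kinner_diff_left kinner_diff_right R0_adjoint)
qed

lemma Rh0_eq_0_iff: "Rh0 x = 0 \<longleftrightarrow> x \<in> range G0"
proof
  assume "Rh0 x = 0"
  then have "R0 x = R0 (G0 (Qi0 (G0p (R0 x))))" by (simp add: krein_resolvent_def)
  then have "x = G0 (Qi0 (G0p (R0 x)))" by (rule is_resolvent_inj[OF R0(1)])
  then show "x \<in> range G0" by (metis rangeI)
next
  assume "x \<in> range G0"
  moreover have "Qi0 (G0p (R0 (G0 h))) = h" for h using Qi0(2)[of h] by (simp only: Q_apply)
  ultimately show "Rh0 x = 0" using krein_resolvent_G0 by blast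
qed

lemma krein_resolvent_gamma:
  assumes z: "is_resolvent A z Rz" and lz: "clinear Qiz"
    and qz: "\<And>h. Qiz (G0p (Rz (G0 h))) = h"
  shows "- R0 (G0 (Qi0 h)) + (z - z0) *\<^sub>C krein_resolvent Rz Qiz (- R0 (G0 (Qi0 h)))
    = - Rz (G0 (Qiz h))"
proof -
  note L = clinear_rules[OF is_resolvent_clinear[OF z]] clinear_rules[OF lz]
    clinear_rules[OF G0p_clinear] clinear_rules[OF G0_clinear]
  define u where "u = Qi0 h"
  define v where "v = R0 (G0 u)"
  have Rz_v: "(z - z0) *\<^sub>C Rz v = Rz (G0 u) - v"
    using resolvent_identity[OF A_clinear z R0(1), of "G0 u"] by (simp add: v_def)
  have "G0p ((z - z0) *\<^sub>C Rz v) = G0p (Rz (G0 u)) - h"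
    unfolding Rz_v by (simp add: L v_def u_def Qi0(1) flip: Q_apply)
  then have Qiz_v: "Qiz (G0p ((z - z0) *\<^sub>C Rz v)) = u - Qiz h"
    by (simp only: L qz)
  have "(z - z0) *\<^sub>C krein_resolvent Rz Qiz v
      = (z - z0) *\<^sub>C Rz v - Rz (G0 (Qiz (G0p ((z - z0) *\<^sub>C Rz v))))"
    by (simp add: krein_resolvent_def cscale_diff_right L)
  also have "\<dots> = Rz (G0 (Qiz h)) - v"
    by (simp only: Qiz_v) (simp add: Rz_v L)
  finally have "(z - z0) *\<^sub>C krein_resolvent Rz Qiz v = Rz (G0 (Qiz h)) - v" .
  then show ?thesis
    by (simp add: v_def u_def cscale_minus_right
        clinear_minus[OF krein_resolvent_clinear[OF is_resolvent_clinear[OF z] lz]])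
qed

lemma Qic_Rc_resolvent:
  assumes z: "is_resolvent A z Rz" and qz: "\<And>k. G0p (Rz (G0 (Qiz k))) = k"
  shows "(z - cnj z0) *\<^sub>C Qic (G0p (Rc (Rz (G0 (Qiz h))))) = Qic h - Qiz h"
proof -
  note L = clinear_rules[OF G0p_clinear] clinear_rules[OF Rc_clinear] clinear_rules[OF Qic(3)]
  have "(z - cnj z0) *\<^sub>C Rc (Rz (G0 (Qiz h))) = Rz (G0 (Qiz h)) - Rc (G0 (Qiz h))"
    using resolvent_identity'[OF A_clinear z Rc] by simp
  then have "G0p ((z - cnj z0) *\<^sub>C Rc (Rz (G0 (Qiz h)))) = h - Qc (Qiz h)"
    by (simp only: L qz Q_apply)
  then have "Qic (G0p ((z - cnj z0) *\<^sub>C Rc (Rz (G0 (Qiz h))))) = Qic h - Qiz h"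
    by (simp only: L Qic(2))
  then show ?thesis by (simp only: L)
qed

end

section \<open>The self-adjoint relation \<open>\<hat>A\<close>\<close>

locale krein_formula = q_function J A P At G0 Q z0
  for J :: "'k::chilbert \<Rightarrow> 'k" and A P At and G0 :: "'h::chilbert \<Rightarrow> 'k" and Q z0 +
  fixes Gam Gamhat :: "'h \<Rightarrow> 'k"
    and Ahat :: "('k \<times> 'k) set"
  assumes Gam_def: "Gam = cresolvent A z0 \<circ> G0"
    and Gamhat_def: "Gamhat = (\<lambda>h. - Gam (inv (Q z0) h))"
    and Ahat_def: "rinv (rshift Ahat z0) =
       ograph (\<lambda>x. cresolvent A z0 x
                  - cresolvent A z0 (G0 (inv (Q z0) (padj J G0 (cresolvent A z0 x)))))"
begin

lemma Ahat_resolvent_graph: "rinv (rshift Ahat z0) = ograph Rh0"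
  using Ahat_def by (simp add: krein_resolvent_def[abs_def])

lemma linrel_Ahat: "linrel Ahat"
  using Ahat_resolvent_graph Rh0_clinear by (rule linrel_of_resolvent_graph)

lemma radj_Ahat: "radj J Ahat = Ahat"
proof
  show "radj J Ahat \<subseteq> Ahat"
    using Ahat_resolvent_graph Rh0_clinear Rh0_adjoint Rh0_Rhc by (rule radj_subset_resolvent_graph)
  show "Ahat \<subseteq> radj J Ahat"
    using Ahat_resolvent_graph Rh0_adjoint Rhc_Rh0 by (rule resolvent_graph_symmetric)
qed

lemma mulpart_Ahat: "mulpart Ahat = range G0" and rker_Ahat: "rker (rinv (rshift Ahat z0)) = range G0"
  using mulpart_of_resolvent_graph[OF Ahat_resolvent_graph] Rh0_eq_0_iff by auto

lemma rresolvent_Ahat: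
  assumes zA: "z \<in> cres A" and zr: "z \<in> rres Ahat" and zQ: "binvertible (Q z)"
  shows "rresolvent Ahat z = krein_resolvent (cresolvent A z) (inv (Q z))"
proof -
  define Rhz where "Rhz = krein_resolvent (cresolvent A z) (inv (Q z))"
  note Rz = cresolvent_is_resolvent[OF zA]
  note Qiz = binvertible_inv[OF zQ]
  obtain R where R: "rinv (rshift Ahat z) = ograph R" using zr by (auto simp: rres_def)
  have Rhz_clinear: "clinear Rhz"
    unfolding Rhz_def using bop_clinear[OF Rz(2)] bop_clinear[OF Qiz(1)] by (rule krein_resolvent_clinear)
  have "R y = Rhz y" for y
  proof -
    define x where "x = y + (z - z0) *\<^sub>C R y"
    have "(R y, y + z *\<^sub>C R y) \<in> Ahat" by (simp add: resolvent_graph_mem_iff[OF R])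
    then have Ry: "R y = Rh0 x"
      by (simp add: resolvent_graph_mem_iff[OF Ahat_resolvent_graph] x_def cscale_diff_left algebra_simps)
    have identity: "Rhz x - Rh0 x = (z - z0) *\<^sub>C Rhz (Rh0 x)"
      unfolding Rhz_def
    proof (rule krein_resolvent_identity[OF Rz(1) R0(1) bop_clinear[OF Qiz(1)]])
      show "inv (Q z) (G0p (cresolvent A z (G0 h))) = h" for h using Qiz(2) by (simp add: Q_apply)
      show "G0p (R0 (G0 (Qi0 k))) = k" for k using Qi0(1) by (simp add: Q_apply)
    qed
    have "y = x - (z - z0) *\<^sub>C R y" by (simp add: x_def)
    then have "Rhz y = Rhz x - (z - z0) *\<^sub>C Rhz (Rh0 x)"
      unfolding Ry by (simp add: clinear_rules[OF Rhz_clinear])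
    with identity show ?thesis unfolding Ry by (simp add: algebra_simps)
  qed
  then show ?thesis using rresolvent_of_graph[OF R] by (auto simp: Rhz_def)
qed

lemma Gamhat_apply: "Gamhat h = - R0 (G0 (Qi0 h))"
  by (simp add: Gamhat_def Gam_def)

lemma padj_Gamhat: "padj J Gamhat = (\<lambda>k. - Qic (G0p (Rc k)))"
  by (rule padj_unique)
    (simp add: cinner_minus_right Gamhat_apply kinner_minus_left G0p(2) R0_adjoint flip: Qic(4))

lemma minus_inv_Q_representation:
  assumes zA: "z \<in> cres A" and zr: "z \<in> rres Ahat" and zQ: "binvertible (Q z)"
  shows "- inv (Q z) h = - inv (Q (cnj z0)) h
      + (z - cnj z0) *\<^sub>C padj J Gamhat (Gamhat h + (z - z0) *\<^sub>C rresolvent Ahat z (Gamhat h))"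
proof -
  define Rz where "Rz = cresolvent A z"
  define Qiz where "Qiz = inv (Q z)"
  note Rz = cresolvent_is_resolvent[OF zA, folded Rz_def]
  note Qiz = binvertible_inv[OF zQ, folded Qiz_def]
  have left: "Qiz (G0p (Rz (G0 h))) = h" for h using Qiz(2) by (simp add: Q_apply Rz_def)
  have right: "G0p (Rz (G0 (Qiz k))) = k" for k using Qiz(3) by (simp add: Q_apply Rz_def)
  have "Gamhat h + (z - z0) *\<^sub>C rresolvent Ahat z (Gamhat h) = - Rz (G0 (Qiz h))"
    using krein_resolvent_gamma[OF Rz(1) bop_clinear[OF Qiz(1)] left]
    by (simp add: Gamhat_apply rresolvent_Ahat[OF zA zr zQ] Rz_def Qiz_def)
  then have "(z - cnj z0) *\<^sub>C padj J Gamhat (Gamhat h + (z - z0) *\<^sub>C rresolvent Ahat z (Gamhat h))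
      = Qic h - Qiz h"
    using Qic_Rc_resolvent[OF Rz(1) right]
    by (simp add: padj_Gamhat clinear_minus[OF G0p_clinear] clinear_minus[OF Rc_clinear]
        clinear_minus[OF Qic(3)] cscale_minus_right)
  then show ?thesis by (simp add: Qiz_def)
qed

end

theorem corollary2:
  fixes J :: "'k::chilbert \<Rightarrow> 'k"
    and A P At :: "'k \<Rightarrow> 'k"
    and G0 Gam Gamhat :: "'h::chilbert \<Rightarrow> 'k"
    and Q :: "complex \<Rightarrow> 'h \<Rightarrow> 'h"
    and z0 :: complex
    and Ahat :: "('k \<times> 'k) set"
  assumes K: "pontryagin J"
    and A_bounded: "bop A"
    and A_selfadj: "\<forall>x y. kinner J (A x) y = kinner J x (A y)"
    and G0_bounded: "bop G0"
    and G0_inv: "binvertible (padj J G0 \<circ> G0)"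
    and Q_def: "\<forall>z. Q z = padj J G0 \<circ> cresolvent A z \<circ> G0"
    and P_def: "P = G0 \<circ> inv (padj J G0 \<circ> G0) \<circ> padj J G0"
    and At_def: "At = (\<lambda>x. x - P x) \<circ> A \<circ> (\<lambda>x. x - P x)"
    and z0_A: "z0 \<in> cres A"
    and z0_At: "z0 \<in> res_on (range (\<lambda>x. x - P x)) At"
    and z0_upper: "0 < Im z0"
    and Gam_def: "Gam = cresolvent A z0 \<circ> G0"
    and Gamhat_def: "Gamhat = (\<lambda>h. - Gam (inv (Q z0) h))"
    and Ahat_def: "rinv (rshift Ahat z0) =
       ograph (\<lambda>x. cresolvent A z0 x
                  - cresolvent A z0 (G0 (inv (Q z0) (padj J G0 (cresolvent A z0 x)))))"
  shows "linrel Ahat \<and> radj J Ahat = Ahat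
    \<and> (\<forall>z. z \<in> cres A \<and> z \<in> rres Ahat \<and> binvertible (Q z) \<longrightarrow>
          (\<forall>h. - inv (Q z) h =
                 - inv (Q (cnj z0)) h
                 + (z - cnj z0) *\<^sub>C padj J Gamhat
                     (Gamhat h + (z - z0) *\<^sub>C rresolvent Ahat z (Gamhat h))))
    \<and> mulpart Ahat = rker (rinv (rshift Ahat z0))
    \<and> rker (rinv (rshift Ahat z0)) = range P
    \<and> range P = range G0
    \<and> ((\<exists>h::'h. h \<noteq> 0) \<longrightarrow> mulpart Ahat \<noteq> {0})"
proof -
  interpret krein_formula J A P At G0 Q z0 Gam Gamhat Ahat
    using pontryagin_krein_space[OF K] A_bounded A_selfadj G0_bounded G0_inv Q_def P_def At_def
      z0_A z0_At Gam_def Gamhat_def Ahat_def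
    by (simp add: krein_formula_def q_function_def q_function_axioms_def selfadjoint_operator_def
        selfadjoint_operator_axioms_def krein_formula_axioms_def)
  have "mulpart Ahat \<noteq> {0}" if "h \<noteq> 0" for h :: 'h
    using that G0_eq_0_iff[of h] mulpart_Ahat by blast
  then show ?thesis
    using linrel_Ahat radj_Ahat minus_inv_Q_representation mulpart_Ahat rker_Ahat range_P by auto
qed

end
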